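(* Let $D$ be a probability distribution on a finite set $\Omega$ with $\mathrm{cp}(D)\le1/N$ for a positive integer $N$, and let $g:\Omega\to\mathbb R$. Then there is a set $T\subseteq\Omega$ of size $N$ such that $\mathbb E_{x\in T}g(x)^2\ge(\mathbb E\,g(D))^2/4$.
   Context: $\mathrm{cp}(D)$ is the collision probability of $D$, i.e. the probability that two independent samples from $D$ are equal. $\mathbb E_{x\in T}$ denotes the uniform average over $T$, and $\mathbb E\,g(D)$ is the expectation of $g$ under $D$. *)

theory Defs
  imports "HOL-Probability.Probability"
begin

definition cp :: "'a pmf \<Rightarrow> real" where
  "cp D = measure_pmf.prob (pair_pmf D D) {z. fst z = snd z}"

end

theory Submission
  imports Defs
begin

text \<open>
  Let \<open>T\<close> be an \<open>N\<close>-subset of \<open>\<Omega>\<close> maximising \<open>\<Sum>x\<in>T. g x\<^sup>2\<close>, and let \<open>A\<close> be the average of \<open>g\<^sup>2\<close>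
  over \<open>T\<close>. Split \<open>E g(D)\<close> into the contributions of \<open>T\<close> and of \<open>\<Omega> - T\<close>. By Cauchy-Schwarz
  the first is at most \<open>sqrt (cp D \<cdot> N A) \<le> sqrt A\<close>. By maximality every point outside \<open>T\<close>
  has \<open>g\<^sup>2\<close> below every point of \<open>T\<close>, hence \<open>|g| \<le> sqrt A\<close> there, and the second contribution
  is at most \<open>sqrt A\<close> as well. So \<open>(E g(D))\<^sup>2 \<le> 4 A\<close>.
\<close>

lemma cp_eq_sum_pmf_squared:
  assumes "finite \<Omega>" "set_pmf D \<subseteq> \<Omega>"
  shows "cp D = (\<Sum>x\<in>\<Omega>. (pmf D x)\<^sup>2)"
proof -
  have fin: "finite (set_pmf D)" using assms finite_subset by blast
  have "cp D = measure_pmf.prob (pair_pmf D D) ({z. fst z = snd z} \<inter> set_pmf (pair_pmf D D))"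
    unfolding cp_def by (rule measure_Int_set_pmf[symmetric])
  also have "{z. fst z = snd z} \<inter> set_pmf (pair_pmf D D) = (\<lambda>x. (x, x)) ` set_pmf D"
    by auto
  also have "measure_pmf.prob (pair_pmf D D) ((\<lambda>x. (x, x)) ` set_pmf D)
      = (\<Sum>x\<in>set_pmf D. (pmf D x)\<^sup>2)"
    using fin by (simp add: measure_measure_pmf_finite sum.reindex inj_on_def pmf_pair power2_eq_square)
  also have "\<dots> = (\<Sum>x\<in>\<Omega>. (pmf D x)\<^sup>2)"
    using assms by (intro sum.mono_neutral_left) (auto simp: set_pmf_iff)
  finally show ?thesis .
qed

lemma cp_mult_card_ge_1:
  assumes "finite \<Omega>" "set_pmf D \<subseteq> \<Omega>"
  shows "1 \<le> cp D * card \<Omega>"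
proof -
  have "1 = (\<Sum>x\<in>\<Omega>. pmf D x)\<^sup>2"
    using sum_pmf_eq_1[OF assms] by simp
  also have "\<dots> \<le> cp D * card \<Omega>"
    unfolding cp_eq_sum_pmf_squared[OF assms] by (rule sum_squared_le_sum_of_squares)
  finally show ?thesis .
qed

lemma abs_sum_pmf_mult_le_sqrt_cp:
  fixes g :: "'a \<Rightarrow> real"
  assumes "finite \<Omega>" "set_pmf D \<subseteq> \<Omega>" "T \<subseteq> \<Omega>"
  shows "\<bar>\<Sum>x\<in>T. pmf D x * g x\<bar> \<le> sqrt (cp D * (\<Sum>x\<in>T. (g x)\<^sup>2))"
proof -
  have "(\<Sum>x\<in>T. pmf D x * g x)\<^sup>2 \<le> (\<Sum>x\<in>T. (pmf D x)\<^sup>2) * (\<Sum>x\<in>T. (g x)\<^sup>2)"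
    by (rule Cauchy_Schwarz_ineq_sum)
  also have "\<dots> \<le> cp D * (\<Sum>x\<in>T. (g x)\<^sup>2)"
  proof (rule mult_right_mono)
    show "(\<Sum>x\<in>T. (pmf D x)\<^sup>2) \<le> cp D"
      unfolding cp_eq_sum_pmf_squared[OF assms(1,2)] using assms by (intro sum_mono2) auto
  qed (simp add: sum_nonneg)
  finally have "sqrt ((\<Sum>x\<in>T. pmf D x * g x)\<^sup>2) \<le> sqrt (cp D * (\<Sum>x\<in>T. (g x)\<^sup>2))"
    by (rule real_sqrt_le_mono)
  thus ?thesis by simp
qed

lemma abs_sum_pmf_mult_le_bound:
  fixes g :: "'a \<Rightarrow> real"
  assumes "finite S" "0 \<le> B" "\<And>x. x \<in> S \<Longrightarrow> \<bar>g x\<bar> \<le> B"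
  shows "\<bar>\<Sum>x\<in>S. pmf D x * g x\<bar> \<le> B"
proof -
  have "\<bar>\<Sum>x\<in>S. pmf D x * g x\<bar> \<le> (\<Sum>x\<in>S. pmf D x * B)"
    using assms(3) by (intro order.trans[OF sum_abs] sum_mono) (simp add: abs_mult mult_left_mono)
  also have "\<dots> = measure_pmf.prob D S * B"
    using assms(1) by (simp add: measure_measure_pmf_finite sum_distrib_right)
  also have "\<dots> \<le> B"
    using assms(2) by (simp add: mult_left_le_one_le)
  finally show ?thesis .
qed

lemma expectation_eq_sum_pmf_split:
  fixes g :: "'a \<Rightarrow> real"
  assumes "finite \<Omega>" "set_pmf D \<subseteq> \<Omega>" "T \<subseteq> \<Omega>"
  shows "measure_pmf.expectation D g = (\<Sum>x\<in>T. pmf D x * g x) + (\<Sum>x\<in>\<Omega> - T. pmf D x * g x)"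
  using assms by (subst integral_measure_pmf_real[of \<Omega>])
    (auto simp: sum.subset_diff[of T \<Omega>] mult.commute)

text \<open>Take an \<open>N\<close>-subset of maximal total weight; exchanging one of its elements for an
  outside one cannot increase the weight.\<close>

lemma obtain_subset_card_dominating:
  fixes f :: "'a \<Rightarrow> 'b :: linordered_ab_group_add"
  assumes "finite \<Omega>" "N \<le> card \<Omega>"
  obtains T where "T \<subseteq> \<Omega>" "card T = N" "\<And>x y. x \<in> T \<Longrightarrow> y \<in> \<Omega> - T \<Longrightarrow> f y \<le> f x"
proof -
  define S where "S = {T. T \<subseteq> \<Omega> \<and> card T = N}"
  have "finite S"
    by (rule finite_subset[of _ "Pow \<Omega>"]) (auto simp: S_def assms(1))
  moreover have "S \<noteq> {}"
    unfolding S_def using obtain_subset_with_card_n[OF assms(2)] by blast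
  ultimately have "Max (sum f ` S) \<in> sum f ` S"
    by simp
  then obtain T where T: "T \<in> S" and "sum f T = Max (sum f ` S)"
    by (metis imageE)
  with \<open>finite S\<close> have T_max: "sum f T' \<le> sum f T" if "T' \<in> S" for T'
    using that by simp
  have "T \<subseteq> \<Omega>" "card T = N" "finite T"
    using T assms(1) finite_subset by (auto simp: S_def)
  moreover have "f y \<le> f x" if "x \<in> T" "y \<in> \<Omega> - T" for x y
  proof -
    have "insert y (T - {x}) \<in> S"
      using that \<open>T \<subseteq> \<Omega>\<close> \<open>card T = N\<close> \<open>finite T\<close> card_Suc_Diff1[of T x]
      by (auto simp: S_def card_insert_if)
    hence "sum f (insert y (T - {x})) \<le> sum f T" by (rule T_max)
    moreover have "sum f (insert y (T - {x})) = f y + sum f T - f x"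
      using that \<open>finite T\<close> by (simp add: sum_diff1)
    ultimately show ?thesis by simp
  qed
  ultimately show thesis using that by blast
qed

theorem lemma8p4:
  fixes \<Omega> :: "'a set" and D :: "'a pmf" and N :: nat and g :: "'a \<Rightarrow> real"
  assumes "finite \<Omega>" and "set_pmf D \<subseteq> \<Omega>" and "N > 0"
    and "cp D \<le> 1 / real N"
  shows "\<exists>T. T \<subseteq> \<Omega> \<and> card T = N \<and>
           (\<Sum>x\<in>T. (g x)^2) / real (card T) \<ge> (measure_pmf.expectation D g)^2 / 4"
proof -
  have "1 \<le> card \<Omega> / real N"
    using cp_mult_card_ge_1[OF assms(1,2)] mult_right_mono[OF assms(4), of "card \<Omega>"] by simp
  hence "N \<le> card \<Omega>"
    using assms(3) by (simp add: field_simps)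
  then obtain T where T: "T \<subseteq> \<Omega>" "card T = N"
    and dominated: "\<And>x y. x \<in> T \<Longrightarrow> y \<in> \<Omega> - T \<Longrightarrow> (g y)\<^sup>2 \<le> (g x)\<^sup>2"
    using obtain_subset_card_dominating[OF assms(1), of N "\<lambda>x. (g x)\<^sup>2"] by blast
  define A where "A = (\<Sum>x\<in>T. (g x)\<^sup>2) / N"
  have A_nonneg: "0 \<le> A"
    unfolding A_def by (simp add: sum_nonneg)
  have "\<bar>g y\<bar> \<le> sqrt A" if "y \<in> \<Omega> - T" for y
  proof -
    have "N * (g y)\<^sup>2 \<le> (\<Sum>x\<in>T. (g x)\<^sup>2)"
      using sum_bounded_below[of T "(g y)\<^sup>2"] dominated[OF _ that] T(2) by simp
    thus ?thesis
      unfolding A_def using assms(3) by (simp add: real_le_rsqrt field_simps)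
  qed
  hence light: "\<bar>\<Sum>x\<in>\<Omega> - T. pmf D x * g x\<bar> \<le> sqrt A"
    using assms(1) A_nonneg by (intro abs_sum_pmf_mult_le_bound) auto
  have "cp D * (\<Sum>x\<in>T. (g x)\<^sup>2) \<le> A"
    unfolding A_def using mult_right_mono[OF assms(4), of "\<Sum>x\<in>T. (g x)\<^sup>2"] by (simp add: sum_nonneg)
  from real_sqrt_le_mono[OF this] have heavy: "\<bar>\<Sum>x\<in>T. pmf D x * g x\<bar> \<le> sqrt A"
    using abs_sum_pmf_mult_le_sqrt_cp[OF assms(1,2) T(1), of g] by linarith
  have "\<bar>measure_pmf.expectation D g\<bar> \<le> 2 * sqrt A"
    using expectation_eq_sum_pmf_split[OF assms(1,2) T(1), of g] heavy light by linarith
  hence "(measure_pmf.expectation D g)\<^sup>2 \<le> (2 * sqrt A)\<^sup>2"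
    by (metis abs_ge_zero power2_abs power_mono)
  also have "\<dots> = 4 * A"
    using A_nonneg by (simp add: power_mult_distrib)
  finally have "(measure_pmf.expectation D g)\<^sup>2 / 4 \<le> A" by simp
  thus ?thesis
    using T unfolding A_def by auto
qed

end
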